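(* Consider the convex vector optimization problem of minimizing $f(x)$ with respect to $\le_C$ subject to $h(x)\le 0$ (with $C\subseteq\mathbb{R}^q$ a nontrivial pointed convex cone with nonempty interior, $h:\mathbb{R}^n\to\mathbb{R}^m$ continuous and $\mathbb{R}^m_+$-convex, $f:\mathbb{R}^n\to\mathbb{R}^q$ continuous and $C$-convex), with upper image $\mathcal{P}=\operatorname{cl}(f(\mathcal{X})+C)$, where $\mathcal{X}=\{x\mid h(x)\le0\}$, and let $\mathcal{P}_\infty$ be the recession cone of $\mathcal{P}$. Let $\delta\ge 0$, let $\mathcal{Z}\subseteq\mathbb{R}^q$ be a finite $\delta$-inner approximation of $\mathcal{P}_\infty^+$, and let $\mathcal{Y}\subseteq\mathbb{R}^q$ be a finite set with $(\operatorname{cone}\mathcal{Z})^+=\operatorname{cone}\mathcal{Y}$. Then $\mathcal{Y}$ is a finite $\delta$-outer approximation of $\mathcal{P}_\infty$.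
   Context: Norms are Euclidean, $B(c,r)=\{y\mid\|y-c\|\le r\}$, and $d^H(A,B)=\max\{\sup_{a\in A}\inf_{b\in B}\|a-b\|,\sup_{b\in B}\inf_{a\in A}\|a-b\|\}$ is the Hausdorff distance. For $A\subseteq\mathbb{R}^q$: $A^+=\{w\mid w^\mathsf{T} a\ge0\ \forall a\in A\}$ is the dual cone, $\operatorname{cone}A$ is the set of all finite nonnegative combinations of points of $A$ (with $\operatorname{cone}\emptyset=\{0\}$), and the recession cone is $A_\infty=\{d\mid a+\lambda d\in A\ \forall a\in A,\lambda\ge0\}$. For a convex cone $K\subseteq\mathbb{R}^q$, a finite set $\mathcal{Y}$ is a finite $\delta$-outer approximation of $K$ if $K\subseteq\operatorname{cone}\mathcal{Y}$ and $d^H(K\cap B(0,1),\operatorname{cone}\mathcal{Y}\cap B(0,1))\le\delta$; a finite set $\mathcal{Z}$ is a finite $\delta$-inner approximation of $K$ if $\operatorname{cone}\mathcal{Z}\subseteq K$ and $d^H(K\cap B(0,1),\operatorname{cone}\mathcal{Z}\cap B(0,1))\le\delta$. *)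

theory Defs
  imports "HOL-Analysis.Analysis"
begin

definition dual_cone :: "('a::euclidean_space) set \<Rightarrow> 'a set" where
  "dual_cone A = {w. \<forall>a\<in>A. w \<bullet> a \<ge> 0}"

definition cone_gen :: "('a::real_vector) set \<Rightarrow> 'a set" where
  "cone_gen A = {y. \<exists>S u. finite S \<and> S \<subseteq> A \<and> (\<forall>a\<in>S. u a \<ge> 0) \<and> y = (\<Sum>a\<in>S. u a *\<^sub>R a)}"

definition rec_cone :: "('a::real_vector) set \<Rightarrow> 'a set" where
  "rec_cone A = {d. \<forall>a\<in>A. \<forall>t::real. t \<ge> 0 \<longrightarrow> a + t *\<^sub>R d \<in> A}"

definition haus_dist :: "('a::metric_space) set \<Rightarrow> 'a set \<Rightarrow> real" where
  "haus_dist A B = max (SUP a\<in>A. INF b\<in>B. dist a b) (SUP b\<in>B. INF a\<in>A. dist a b)"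

definition outer_approx :: "real \<Rightarrow> ('a::euclidean_space) set \<Rightarrow> 'a set \<Rightarrow> bool" where
  "outer_approx \<delta> K Y \<longleftrightarrow> finite Y \<and> K \<subseteq> cone_gen Y \<and>
     haus_dist (K \<inter> cball 0 1) (cone_gen Y \<inter> cball 0 1) \<le> \<delta>"

definition inner_approx :: "real \<Rightarrow> ('a::euclidean_space) set \<Rightarrow> 'a set \<Rightarrow> bool" where
  "inner_approx \<delta> K Z \<longleftrightarrow> finite Z \<and> cone_gen Z \<subseteq> K \<and>
     haus_dist (K \<inter> cball 0 1) (cone_gen Z \<inter> cball 0 1) \<le> \<delta>"

definition cone_le :: "'a set \<Rightarrow> ('a::ab_group_add) \<Rightarrow> 'a \<Rightarrow> bool" where
  "cone_le C y z \<longleftrightarrow> z - y \<in> C"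

definition cone_convex_fun :: "('b::real_vector) set \<Rightarrow> ('a::real_vector \<Rightarrow> 'b) \<Rightarrow> bool" where
  "cone_convex_fun C f \<longleftrightarrow> (\<forall>x y. \<forall>t::real. 0 \<le> t \<and> t \<le> 1 \<longrightarrow>
      cone_le C (f (t *\<^sub>R x + (1 - t) *\<^sub>R y)) (t *\<^sub>R f x + (1 - t) *\<^sub>R f y))"

definition nonneg_orthant :: "(real^'m) set" where
  "nonneg_orthant = {y. \<forall>i. 0 \<le> y $ i}"

end

theory Submission
  imports Defs
begin

text \<open>
  Let \<open>K\<close> be the recession cone of the upper image; it is a closed convex cone, so every \<open>y\<close>
  splits as \<open>y = p + (y - p)\<close> with \<open>p\<close> the projection of \<open>y\<close> onto \<open>K\<close>, \<open>p \<bottom> y - p\<close> and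
  \<open>p - y \<in> K\<^sup>+\<close>. Since \<open>cone Z \<subseteq> K\<^sup>+\<close>, we get \<open>K \<subseteq> (cone Z)\<^sup>+ = cone Y\<close>. Conversely, for a unit-ball
  point \<open>y \<in> cone Y = (cone Z)\<^sup>+\<close> with \<open>e = \<parallel>p - y\<parallel>\<close>, the normalised vector \<open>w = (p - y)/e\<close> lies in
  \<open>K\<^sup>+ \<inter> B(0,1)\<close> and satisfies \<open>w \<bullet> y = -e\<close>; approximating it by \<open>m \<in> cone Z\<close> within \<open>\<delta> + \<epsilon>\<close>
  gives \<open>e = (m - w) \<bullet> y - m \<bullet> y \<le> \<parallel>m - w\<parallel> < \<delta> + \<epsilon>\<close>, so \<open>y\<close> is within \<open>\<delta>\<close> of \<open>p \<in> K \<inter> B(0,1)\<close>.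
\<close>

lemma zero_in_cone_gen: "0 \<in> cone_gen A"
  unfolding cone_gen_def by (rule CollectI, rule exI[of _ "{}"]) auto

lemma subset_dual_cone_swap:
  fixes K M :: "'a::euclidean_space set"
  assumes "M \<subseteq> dual_cone K"
  shows "K \<subseteq> dual_cone M"
  using assms unfolding dual_cone_def by (fastforce simp: inner_commute)

lemma convex_cone_rec_cone: "convex_cone (rec_cone P)"
  unfolding convex_cone_iff
proof (intro conjI ballI allI impI)
  show "0 \<in> rec_cone P" unfolding rec_cone_def by simp
next
  fix a b assume a: "a \<in> rec_cone P" and b: "b \<in> rec_cone P"
  show "a + b \<in> rec_cone P" unfolding rec_cone_def
  proof (intro CollectI ballI allI impI)
    fix x and t :: real assume "x \<in> P" "0 \<le> t"
    then have "(x + t *\<^sub>R a) + t *\<^sub>R b \<in> P" using a b unfolding rec_cone_def by blast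
    then show "x + t *\<^sub>R (a + b) \<in> P" by (simp add: scaleR_add_right add.assoc)
  qed
next
  fix a and c :: real assume "a \<in> rec_cone P" "0 \<le> c"
  then show "c *\<^sub>R a \<in> rec_cone P" unfolding rec_cone_def by simp
qed

lemma closed_rec_cone:
  fixes P :: "'a::real_normed_vector set"
  assumes "closed P"
  shows "closed (rec_cone P)"
proof -
  have "rec_cone P = (\<Inter>a\<in>P. \<Inter>t\<in>{0..}. (\<lambda>d. a + t *\<^sub>R d) -` P)"
    unfolding rec_cone_def by auto
  then show ?thesis
    by (simp only:) (intro closed_INT ballI closed_vimage assms continuous_intros)
qed

lemma haus_dist_le_imp_dist_less:
  fixes A B :: "'a::euclidean_space set"
  assumes "haus_dist A B \<le> d" "A \<subseteq> cball 0 1" "0 \<in> B" "a \<in> A" "d < e"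
  shows "\<exists>b\<in>B. dist a b < e"
proof -
  have bdd: "bdd_below ((\<lambda>b. dist x b) ` B)" for x by (rule bdd_belowI[of _ 0]) auto
  have "(INF b\<in>B. dist x b) \<le> 1" if "x \<in> A" for x
    using cINF_lower[OF bdd assms(3), of x] assms(2) that by auto
  then have "(INF b\<in>B. dist a b) \<le> (SUP x\<in>A. INF b\<in>B. dist x b)"
    by (intro cSUP_upper[OF assms(4)] bdd_aboveI[of _ 1]) auto
  also have "\<dots> \<le> d" using assms(1) unfolding haus_dist_def by simp
  finally have "(INF b\<in>B. dist a b) < e" using assms(5) by simp
  then show ?thesis using cINF_less_iff[of B "\<lambda>b. dist a b" e] bdd assms(3) by auto
qed

lemma haus_dist_leI:
  fixes A B :: "'a::metric_space set"
  assumes "A \<noteq> {}" "B \<noteq> {}"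
    and "\<And>a. a \<in> A \<Longrightarrow> \<exists>b\<in>B. dist a b \<le> d"
    and "\<And>b. b \<in> B \<Longrightarrow> \<exists>a\<in>A. dist a b \<le> d"
  shows "haus_dist A B \<le> d"
proof -
  have "(SUP a\<in>A. INF b\<in>B. dist a b) \<le> d"
  proof (rule cSUP_least[OF assms(1)])
    fix a assume "a \<in> A"
    then obtain b where "b \<in> B" "dist a b \<le> d" using assms(3) by blast
    then show "(INF b\<in>B. dist a b) \<le> d" by (intro cINF_lower2 bdd_belowI[of _ 0]) auto
  qed
  moreover have "(SUP b\<in>B. INF a\<in>A. dist a b) \<le> d"
  proof (rule cSUP_least[OF assms(2)])
    fix b assume "b \<in> B"
    then obtain a where "a \<in> A" "dist a b \<le> d" using assms(4) by blast
    then show "(INF a\<in>A. dist a b) \<le> d" by (intro cINF_lower2 bdd_belowI[of _ 0]) auto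
  qed
  ultimately show ?thesis unfolding haus_dist_def by simp
qed

lemma closest_point_convex_cone:
  fixes K :: "'a::euclidean_space set" and y :: 'a
  assumes "closed K" "convex_cone K"
  defines "p \<equiv> closest_point K y"
  shows "p \<in> K" and "p - y \<in> dual_cone K"
    and "(p - y) \<bullet> y = - (norm (p - y))\<^sup>2" and "norm p \<le> norm y"
proof -
  have K0: "0 \<in> K" using assms(2) by (rule convex_cone_contains_0)
  show pK: "p \<in> K" unfolding p_def using closest_point_in_set[OF assms(1)] K0 by auto
  have dot: "(y - p) \<bullet> (x - p) \<le> 0" if "x \<in> K" for x
    unfolding p_def using closest_point_dot[OF _ assms(1) that] assms(2)
    by (simp add: convex_cone_def)
  have "(y - p) \<bullet> (0 - p) \<le> 0" using dot K0 .
  moreover have "(y - p) \<bullet> (2 *\<^sub>R p - p) \<le> 0"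
    using dot convex_cone_scaleR[OF assms(2) _ pK, of 2] by simp
  ultimately have orth: "(y - p) \<bullet> p = 0" by (simp add: algebra_simps)
  show "p - y \<in> dual_cone K"
    unfolding dual_cone_def using dot[OF convex_cone_add[OF assms(2) _ pK]]
    by (simp add: algebra_simps inner_commute)
  show "(p - y) \<bullet> y = - (norm (p - y))\<^sup>2"
    using orth by (simp add: power2_norm_eq_inner algebra_simps inner_commute)
  have "(norm y)\<^sup>2 = (norm p)\<^sup>2 + (norm (y - p))\<^sup>2"
    using orth by (simp add: power2_norm_eq_inner algebra_simps inner_commute)
  then have "(norm p)\<^sup>2 \<le> (norm y)\<^sup>2" by simp
  then show "norm p \<le> norm y" by (rule power2_le_imp_le) simp
qed

lemma dist_closest_point_le_haus_dist_dual:
  fixes K M :: "'a::euclidean_space set"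
  assumes "closed K" "convex_cone K" "0 \<in> M"
    and haus: "haus_dist (dual_cone K \<inter> cball 0 1) (M \<inter> cball 0 1) \<le> \<delta>"
    and y: "y \<in> dual_cone M" "norm y \<le> 1"
  shows "dist y (closest_point K y) \<le> \<delta>"
proof -
  define p where "p = closest_point K y"
  define e where "e = norm (p - y)"
  define w where "w = (1 / e) *\<^sub>R (p - y)"
  note proj = closest_point_convex_cone[OF assms(1,2), of y, folded p_def]
  have "norm w \<le> 1" unfolding w_def e_def by simp
  then have wD: "w \<in> dual_cone K \<inter> cball 0 1"
    using proj(2) unfolding w_def dual_cone_def by (auto simp: e_def)
  have wy: "w \<bullet> y = - e"
    using proj(3) unfolding w_def e_def by (simp add: power2_eq_square)
  have "e < \<delta> + \<epsilon>" if eps: "\<epsilon> > 0" for \<epsilon>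
  proof -
    obtain m where m: "m \<in> M \<inter> cball 0 1" "dist w m < \<delta> + \<epsilon>"
      using haus_dist_le_imp_dist_less[OF haus Int_lower2 _ wD, where e = "\<delta> + \<epsilon>"]
        \<open>0 \<in> M\<close> eps by auto
    have "m \<bullet> y \<ge> 0" using m(1) y(1) unfolding dual_cone_def by (auto simp: inner_commute)
    then have "e \<le> (m - w) \<bullet> y" using wy by (simp add: algebra_simps)
    also have "\<dots> \<le> norm (m - w) * norm y" by (rule norm_cauchy_schwarz)
    also have "\<dots> \<le> norm (m - w)" using y(2) by (simp add: mult_left_le)
    also have "\<dots> < \<delta> + \<epsilon>" using m(2) by (simp add: dist_norm norm_minus_commute)
    finally show ?thesis .
  qed
  then have "e \<le> \<delta>" by (meson field_le_epsilon less_imp_le)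
  then show ?thesis unfolding e_def p_def by (simp add: dist_norm norm_minus_commute)
qed

lemma outer_approx_of_inner_approx_dual:
  fixes K Z Y :: "'a::euclidean_space set"
  assumes "closed K" "convex_cone K" "0 \<le> \<delta>"
    and inner: "inner_approx \<delta> (dual_cone K) Z"
    and YZ: "dual_cone (cone_gen Z) = cone_gen Y" and "finite Y"
  shows "outer_approx \<delta> K Y"
proof -
  have ZK: "cone_gen Z \<subseteq> dual_cone K"
    and haus: "haus_dist (dual_cone K \<inter> cball 0 1) (cone_gen Z \<inter> cball 0 1) \<le> \<delta>"
    using inner unfolding inner_approx_def by auto
  have KY: "K \<subseteq> cone_gen Y" using subset_dual_cone_swap[OF ZK] YZ by simp
  have "haus_dist (K \<inter> cball 0 1) (cone_gen Y \<inter> cball 0 1) \<le> \<delta>"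
  proof (rule haus_dist_leI)
    show "K \<inter> cball 0 1 \<noteq> {}" using convex_cone_contains_0[OF assms(2)] by auto
    show "cone_gen Y \<inter> cball 0 1 \<noteq> {}" using zero_in_cone_gen[of Y] by auto
    show "\<exists>b\<in>cone_gen Y \<inter> cball 0 1. dist a b \<le> \<delta>" if "a \<in> K \<inter> cball 0 1" for a
      using that KY \<open>0 \<le> \<delta>\<close> by (intro bexI[of _ a]) auto
    show "\<exists>a\<in>K \<inter> cball 0 1. dist a y \<le> \<delta>" if y: "y \<in> cone_gen Y \<inter> cball 0 1" for y
    proof (intro bexI[of _ "closest_point K y"])
      have "dist y (closest_point K y) \<le> \<delta>"
        using y YZ dist_closest_point_le_haus_dist_dual[OF assms(1,2) zero_in_cone_gen haus]
        by auto
      then show "dist (closest_point K y) y \<le> \<delta>" by (simp add: dist_commute)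
      show "closest_point K y \<in> K \<inter> cball 0 1"
        using closest_point_convex_cone[OF assms(1,2), of y] y by auto
    qed
  qed
  then show ?thesis unfolding outer_approx_def using KY \<open>finite Y\<close> by simp
qed

theorem proposition4p4:
  fixes C :: "(real^'q) set"
    and f :: "real^'n \<Rightarrow> real^'q"
    and h :: "real^'n \<Rightarrow> real^'m"
    and \<delta> :: real
    and Z Y :: "(real^'q) set"
  assumes C_cone: "convex C" "cone C"
    and C_nontriv: "C \<noteq> {0}"
    and C_pointed: "C \<inter> uminus ` C = {0}"
    and C_int: "interior C \<noteq> {}"
    and h_cont: "continuous_on UNIV h"
    and h_conv: "cone_convex_fun nonneg_orthant h"
    and f_cont: "continuous_on UNIV f"
    and f_conv: "cone_convex_fun C f"
    and \<delta>_nonneg: "\<delta> \<ge> 0"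
    and Z_inner: "inner_approx \<delta>
        (dual_cone (rec_cone (closure {f x + c | x c. (\<forall>i. h x $ i \<le> 0) \<and> c \<in> C}))) Z"
    and Y_fin: "finite Y"
    and YZ: "dual_cone (cone_gen Z) = cone_gen Y"
  shows "outer_approx \<delta>
        (rec_cone (closure {f x + c | x c. (\<forall>i. h x $ i \<le> 0) \<and> c \<in> C})) Y"
  by (rule outer_approx_of_inner_approx_dual[OF closed_rec_cone[OF closed_closure]
        convex_cone_rec_cone \<delta>_nonneg Z_inner YZ Y_fin])

end
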